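(* Let $L>2$, $\Delta=L^{-1}$, $\varepsilon_1=24\exp(-L)$, and define $$\Phi_\pm(x)=L\int_{-1/2\mp\Delta^{1/2}}^{1/2\pm\Delta^{1/2}}\Gamma\big((x-\mu)L\big)\,\mathrm{d}\mu\ \pm\ \varepsilon_1\Gamma(x),$$ where $\Gamma(x)=\exp(-\pi x^2)$. Let $\chi$ be the characteristic function of $[-1/2,1/2)$. Then $\Phi_-(x)\le\chi(x)\le\Phi_+(x)$ for all $x\in\mathbb{R}$, and $$\int_{-\infty}^{\infty}\Phi_\pm(x)\,\mathrm{d}x=1\pm(2\Delta^{1/2}+\varepsilon_1).$$
   Context: In $\Phi_\pm$ the upper signs go with $\Phi_+$ and the lower signs with $\Phi_-$. $\Gamma$ here denotes the Gaussian $\exp(-\pi x^2)$, not Euler's Gamma function. *)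

theory Defs
  imports "HOL-Analysis.Analysis"
begin

definition gauss :: "real \<Rightarrow> real" where
  "gauss x = exp (- pi * x\<^sup>2)"

text \<open>Oriented integral over [a,b] (negated when a > b), as in the usual convention.\<close>
definition Phi_plus :: "real \<Rightarrow> real \<Rightarrow> real" where
  "Phi_plus L x =
     L * (LBINT \<mu>=(-1/2 - sqrt (1/L))..(1/2 + sqrt (1/L)). gauss ((x - \<mu>) * L))
     + 24 * exp (- L) * gauss x"

definition Phi_minus :: "real \<Rightarrow> real \<Rightarrow> real" where
  "Phi_minus L x =
     L * (LBINT \<mu>=(-1/2 + sqrt (1/L))..(1/2 - sqrt (1/L)). gauss ((x - \<mu>) * L))
     - 24 * exp (- L) * gauss x"

definition chi :: "real \<Rightarrow> real" where
  "chi x = (if -1/2 \<le> x \<and> x < 1/2 then 1 else 0)"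

end

theory Submission
  imports Defs "HOL-Probability.Distributions"
begin

(*
  Phi_plus and Phi_minus are the indicators of the intervals enlarged resp. shrunk by
  Delta^(1/2) = L^(-1/2), smoothed by the kernel L Gamma(L y), plus resp. minus eps_1 Gamma.
  The kernel is a normal density, so it has unit mass and Fubini gives the integrals.
  For the inequalities, the kernel mass at distance at least delta from x is at most
  2 exp(-pi (delta L)^2), by comparing the Gaussian pointwise with its translates by
  +- delta L.  Taking delta >= L^(-1/2) (plus the distance from x to [-1/2, 1/2] when x
  lies outside) makes this at most 2 exp(-L) Gamma(x), which eps_1 Gamma(x) absorbs.
*)

lemma gauss_pos: "0 < gauss x"
  by (simp add: gauss_def)

lemma gauss_minus: "gauss (- x) = gauss x"
  by (simp add: gauss_def)

lemma gauss_le_shifted: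
  assumes "0 \<le> T" "T \<le> w"
  shows "gauss w \<le> exp (- pi * T\<^sup>2) * gauss (w - T)"
proof -
  have "T\<^sup>2 + (w - T)\<^sup>2 \<le> w\<^sup>2"
    using mult_nonneg_nonneg[of T "w - T"] assms by (simp add: power2_eq_square algebra_simps)
  then have "pi * (T\<^sup>2 + (w - T)\<^sup>2) \<le> pi * w\<^sup>2"
    by (rule mult_left_mono) simp
  then show ?thesis
    by (simp add: gauss_def exp_add[symmetric] algebra_simps)
qed

lemma gauss_le_shifted_abs:
  assumes "0 \<le> T" "T \<le> \<bar>w\<bar>"
  shows "gauss w \<le> exp (- pi * T\<^sup>2) * (gauss (w - T) + gauss (w + T))"
proof (cases "0 \<le> w")
  case True
  then show ?thesis
    using gauss_le_shifted[OF assms(1), of w] assms(2) gauss_pos[of "w + T"]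
    by (simp add: distrib_left add_increasing2)
next
  case False
  then have "gauss w \<le> exp (- pi * T\<^sup>2) * gauss (w + T)"
    using gauss_le_shifted[OF assms(1), of "- w"] assms(2) gauss_minus[of w] gauss_minus[of "w + T"]
    by simp
  then show ?thesis
    using gauss_pos[of "w - T"] by (simp add: distrib_left add_increasing)
qed

lemma scaled_gauss_eq_normal_density:
  assumes "0 < L"
  shows "L * gauss ((x - \<mu>) * L) = normal_density \<mu> (1 / (L * sqrt (2 * pi))) x"
proof -
  define \<sigma> where "\<sigma> = 1 / (L * sqrt (2 * pi))"
  have var: "2 * \<sigma>\<^sup>2 = 1 / (pi * L\<^sup>2)"
    using assms by (simp add: \<sigma>_def power_divide power_mult_distrib)
  have "2 * pi * \<sigma>\<^sup>2 = 1 / L\<^sup>2"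
    using assms by (simp add: \<sigma>_def power_divide power_mult_distrib)
  then have "sqrt (2 * pi * \<sigma>\<^sup>2) = 1 / L"
    using assms by (simp add: real_sqrt_divide)
  moreover have "- (x - \<mu>)\<^sup>2 / (2 * \<sigma>\<^sup>2) = - pi * ((x - \<mu>) * L)\<^sup>2"
    unfolding var by (simp add: power_mult_distrib)
  ultimately show ?thesis
    using assms by (simp add: normal_density_def gauss_def \<sigma>_def[symmetric])
qed

lemma normal_density_eq_scaled_gauss:
  assumes "0 < L"
  shows "normal_density x (1 / (L * sqrt (2 * pi))) = (\<lambda>\<mu>. L * gauss ((x - \<mu>) * L))"
proof
  fix \<mu>
  have "gauss ((x - \<mu>) * L) = gauss ((\<mu> - x) * L)"
    using gauss_minus[of "(\<mu> - x) * L"] by (simp add: algebra_simps)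
  then show "normal_density x (1 / (L * sqrt (2 * pi))) \<mu> = L * gauss ((x - \<mu>) * L)"
    using scaled_gauss_eq_normal_density[OF assms, of \<mu> x] by simp
qed

lemma integrable_scaled_gauss:
  assumes "0 < L"
  shows "integrable lborel (\<lambda>\<mu>. L * gauss ((x - \<mu>) * L))"
proof -
  have "0 < 1 / (L * sqrt (2 * pi))"
    using assms by simp
  from integrable_normal_density[OF this, of x] show ?thesis
    unfolding normal_density_eq_scaled_gauss[OF assms] .
qed

lemma integral_scaled_gauss:
  assumes "0 < L"
  shows "(\<integral>\<mu>. L * gauss ((x - \<mu>) * L) \<partial>lborel) = 1"
proof -
  have "0 < 1 / (L * sqrt (2 * pi))"
    using assms by simp
  from integral_normal_density[OF this, of x] show ?thesis
    unfolding normal_density_eq_scaled_gauss[OF assms] .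
qed

lemma nn_integral_scaled_gauss:
  assumes "0 < L"
  shows "(\<integral>\<^sup>+x. ennreal (L * gauss ((x - \<mu>) * L)) \<partial>lborel) = 1"
  using assms by (simp add: scaled_gauss_eq_normal_density nn_integral_eq_integral)

lemma has_integral_gauss: "(gauss has_integral 1) UNIV"
proof -
  have "(\<lambda>\<mu>. 1 * gauss ((0 - \<mu>) * 1)) = gauss"
    by (simp add: gauss_minus)
  then show ?thesis
    using has_integral_integral_lborel[OF integrable_scaled_gauss[of 1 0]] integral_scaled_gauss[of 1 0]
    by simp
qed

text \<open>For \<open>b < a\<close> the oriented integral makes this the negative of the value for \<open>(b, a)\<close>;
  this happens for \<open>Phi_minus\<close> when \<open>L < 4\<close>.\<close>
definition smoothed_indicator :: "real \<Rightarrow> real \<Rightarrow> real \<Rightarrow> real \<Rightarrow> real" where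
  "smoothed_indicator L a b x = L * (LBINT \<mu>=a..b. gauss ((x - \<mu>) * L))"

lemma smoothed_indicator_reverse:
  "smoothed_indicator L a b x = - smoothed_indicator L b a x"
  unfolding smoothed_indicator_def by (subst interval_integral_endpoints_reverse) simp

lemma smoothed_indicator_eq_integral:
  assumes "a \<le> b"
  shows "smoothed_indicator L a b x = (\<integral>\<mu>. indicator {a<..<b} \<mu> * (L * gauss ((x - \<mu>) * L)) \<partial>lborel)"
  using assms
  by (simp add: smoothed_indicator_def interval_lebesgue_integral_le_eq set_lebesgue_integral_def
      mult.left_commute)

lemma integrable_indicator_scaled_gauss:
  "0 < L \<Longrightarrow> A \<in> sets lborel \<Longrightarrow>
    integrable lborel (\<lambda>\<mu>. indicator A \<mu> * (L * gauss ((x - \<mu>) * L)))"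
  using integrable_mult_indicator[OF _ integrable_scaled_gauss] by simp

lemma smoothed_indicator_nonneg:
  assumes "a \<le> b" "0 < L"
  shows "0 \<le> smoothed_indicator L a b x"
  unfolding smoothed_indicator_eq_integral[OF assms(1)] using assms(2)
  by (intro integral_nonneg_AE) (simp add: less_imp_le[OF gauss_pos])

lemma smoothed_indicator_nonpos:
  assumes "b \<le> a" "0 < L"
  shows "smoothed_indicator L a b x \<le> 0"
  using smoothed_indicator_nonneg[OF assms] by (simp add: smoothed_indicator_reverse[of L a])

lemma smoothed_indicator_le_1:
  assumes "0 < L"
  shows "smoothed_indicator L a b x \<le> 1"
proof (cases "a \<le> b")
  case True
  have "smoothed_indicator L a b x \<le> (\<integral>\<mu>. L * gauss ((x - \<mu>) * L) \<partial>lborel)"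
    unfolding smoothed_indicator_eq_integral[OF True] using assms
    by (intro integral_mono integrable_indicator_scaled_gauss integrable_scaled_gauss)
      (simp_all add: indicator_def less_imp_le[OF gauss_pos])
  also have "\<dots> = 1"
    using assms by (rule integral_scaled_gauss)
  finally show ?thesis .
next
  case False
  then show ?thesis
    using smoothed_indicator_nonpos[OF _ assms, of b a x] by simp
qed

lemma has_integral_smoothed_indicator:
  assumes "0 < L"
  shows "(smoothed_indicator L a b has_integral (b - a)) UNIV"
proof (induction a b rule: linorder_wlog)
  case (sym a b)
  have "smoothed_indicator L a b = (\<lambda>x. - smoothed_indicator L b a x)"
    using smoothed_indicator_reverse by blast
  with has_integral_neg[OF sym] show ?case
    by simp
next
  case (le a b)
  define K where "K x \<mu> = indicator {a<..<b} \<mu> * (L * gauss ((x - \<mu>) * L))" for x \<mu>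
  have S: "smoothed_indicator L a b x = (\<integral>\<mu>. K x \<mu> \<partial>lborel)" for x
    unfolding K_def by (rule smoothed_indicator_eq_integral[OF le])
  have K_nonneg: "0 \<le> K x \<mu>" for x \<mu>
    using assms by (simp add: K_def less_imp_le[OF gauss_pos])
  have K_integrable: "integrable lborel (K x)" for x
    using integrable_indicator_scaled_gauss[OF assms, of "{a<..<b}" x] by (simp add: K_def[abs_def])
  have S_measurable: "smoothed_indicator L a b \<in> borel_measurable borel"
    unfolding S[abs_def] K_def gauss_def by measurable
  have "ennreal (smoothed_indicator L a b x) = (\<integral>\<^sup>+\<mu>. K x \<mu> \<partial>lborel)" for x
    unfolding S using K_nonneg K_integrable by (intro nn_integral_eq_integral[symmetric] AE_I2)
  then have "(\<integral>\<^sup>+x. smoothed_indicator L a b x \<partial>lborel)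
      = (\<integral>\<^sup>+x. (\<integral>\<^sup>+\<mu>. K x \<mu> \<partial>lborel) \<partial>lborel)"
    by simp
  also have "\<dots> = (\<integral>\<^sup>+\<mu>. (\<integral>\<^sup>+x. K x \<mu> \<partial>lborel) \<partial>lborel)"
    unfolding K_def gauss_def by (intro lborel_pair.Fubini'[symmetric]) measurable
  also have "\<dots> = (\<integral>\<^sup>+\<mu>. indicator {a<..<b} \<mu> \<partial>lborel)"
    using assms by (intro nn_integral_cong) (simp add: K_def indicator_def nn_integral_scaled_gauss)
  also have "\<dots> = ennreal (b - a)"
    using le by simp
  finally show ?case
    using le by (intro nn_integral_has_integral)
      (simp_all add: S_measurable smoothed_indicator_nonneg[OF le assms])
qed

lemma scaled_gauss_mass_far:
  assumes "0 < L" "0 \<le> T"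
  shows "(\<integral>\<mu>. indicator {\<mu>. T \<le> \<bar>x - \<mu>\<bar> * L} \<mu> * (L * gauss ((x - \<mu>) * L)) \<partial>lborel)
    \<le> 2 * exp (- pi * T\<^sup>2)"
proof -
  define K where "K y \<mu> = L * gauss ((y - \<mu>) * L)" for y \<mu>
  define c where "c = exp (- pi * T\<^sup>2)"
  have "indicator {\<mu>. T \<le> \<bar>x - \<mu>\<bar> * L} \<mu> * K x \<mu> \<le> c * K (x - T / L) \<mu> + c * K (x + T / L) \<mu>"
    for \<mu>
  proof (cases "T \<le> \<bar>x - \<mu>\<bar> * L")
    case True
    have "\<bar>(x - \<mu>) * L\<bar> = \<bar>x - \<mu>\<bar> * L"
      using assms(1) by (simp add: abs_mult)
    moreover have "(x - \<mu>) * L - T = (x - T / L - \<mu>) * L" "(x - \<mu>) * L + T = (x + T / L - \<mu>) * L"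
      using assms(1) by (simp_all add: algebra_simps)
    ultimately have "gauss ((x - \<mu>) * L)
        \<le> c * (gauss ((x - T / L - \<mu>) * L) + gauss ((x + T / L - \<mu>) * L))"
      using gauss_le_shifted_abs[OF assms(2), of "(x - \<mu>) * L"] True by (simp add: c_def)
    then show ?thesis
      using True assms(1) mult_left_mono[of _ _ L] by (fastforce simp: K_def algebra_simps)
  next
    case False
    then show ?thesis
      using assms(1) gauss_pos by (simp add: K_def c_def add_nonneg_nonneg less_imp_le)
  qed
  then have "(\<integral>\<mu>. indicator {\<mu>. T \<le> \<bar>x - \<mu>\<bar> * L} \<mu> * K x \<mu> \<partial>lborel)
      \<le> (\<integral>\<mu>. c * K (x - T / L) \<mu> + c * K (x + T / L) \<mu> \<partial>lborel)"
    using assms(1) unfolding K_def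
    by (intro integral_mono integrable_indicator_scaled_gauss Bochner_Integration.integrable_add
        integrable_mult_right integrable_scaled_gauss) auto
  also have "\<dots> = c * (\<integral>\<mu>. K (x - T / L) \<mu> \<partial>lborel) + c * (\<integral>\<mu>. K (x + T / L) \<mu> \<partial>lborel)"
    using assms(1) unfolding K_def
    by (simp only: Bochner_Integration.integral_add integrable_mult_right integrable_scaled_gauss
        integral_mult_right_zero)
  also have "\<dots> = 2 * c"
    unfolding K_def integral_scaled_gauss[OF assms(1)] by simp
  finally show ?thesis
    by (simp add: K_def c_def)
qed

lemma smoothed_indicator_far:
  assumes "0 < L" "0 \<le> \<delta>" "a \<le> b" "b + \<delta> \<le> x \<or> x + \<delta> \<le> a"
  shows "smoothed_indicator L a b x \<le> 2 * exp (- pi * (\<delta> * L)\<^sup>2)"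
proof -
  let ?far = "{\<mu>. \<delta> * L \<le> \<bar>x - \<mu>\<bar> * L}"
  have "{a<..<b} \<subseteq> ?far"
    using assms by (auto intro!: mult_right_mono)
  then have "smoothed_indicator L a b x
      \<le> (\<integral>\<mu>. indicator ?far \<mu> * (L * gauss ((x - \<mu>) * L)) \<partial>lborel)"
    unfolding smoothed_indicator_eq_integral[OF assms(3)] using assms(1)
    by (intro integral_mono integrable_indicator_scaled_gauss)
      (auto simp: indicator_def less_imp_le[OF gauss_pos])
  also have "\<dots> \<le> 2 * exp (- pi * (\<delta> * L)\<^sup>2)"
    using assms(1,2) by (intro scaled_gauss_mass_far) simp_all
  finally show ?thesis .
qed

lemma smoothed_indicator_near:
  assumes "0 < L" "0 \<le> \<delta>" "a + \<delta> \<le> x" "x + \<delta> \<le> b"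
  shows "1 - 2 * exp (- pi * (\<delta> * L)\<^sup>2) \<le> smoothed_indicator L a b x"
proof -
  let ?far = "{\<mu>. \<delta> * L \<le> \<bar>x - \<mu>\<bar> * L}"
  let ?K = "\<lambda>\<mu>. L * gauss ((x - \<mu>) * L)"
  have ab: "a \<le> b"
    using assms(2-4) by simp
  have "- {a<..<b} \<subseteq> ?far"
    using assms by (auto intro!: mult_right_mono)
  then have "?K \<mu> \<le> indicator {a<..<b} \<mu> * ?K \<mu> + indicator ?far \<mu> * ?K \<mu>" for \<mu>
    using assms(1) gauss_pos[of "(x - \<mu>) * L"] by (auto simp: indicator_def)
  then have "(\<integral>\<mu>. ?K \<mu> \<partial>lborel)
      \<le> (\<integral>\<mu>. indicator {a<..<b} \<mu> * ?K \<mu> + indicator ?far \<mu> * ?K \<mu> \<partial>lborel)"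
    using assms(1)
    by (intro integral_mono Bochner_Integration.integrable_add integrable_indicator_scaled_gauss
        integrable_scaled_gauss) auto
  also have "\<dots> = smoothed_indicator L a b x + (\<integral>\<mu>. indicator ?far \<mu> * ?K \<mu> \<partial>lborel)"
    unfolding smoothed_indicator_eq_integral[OF ab] using assms(1)
    by (intro Bochner_Integration.integral_add integrable_indicator_scaled_gauss) auto
  also have "\<dots> \<le> smoothed_indicator L a b x + 2 * exp (- pi * (\<delta> * L)\<^sup>2)"
    using assms(1,2) scaled_gauss_mass_far[of L "\<delta> * L" x] by simp
  finally show ?thesis
    using integral_scaled_gauss[OF assms(1)] by simp
qed

lemma exp_neg_pi_square_le_exp_gauss:
  assumes "2 < L" "0 \<le> t" "\<bar>x\<bar> \<le> t + 1/2"
  shows "exp (- pi * ((t + sqrt (1/L)) * L)\<^sup>2) \<le> exp (- L) * gauss x"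
proof -
  define r where "r = sqrt L"
  have r: "r\<^sup>2 = L" "1 \<le> r"
    using assms(1) by (simp_all add: r_def)
  have shift: "(t + sqrt (1/L)) * L = t * L + r"
    using assms(1) r by (simp add: r_def real_sqrt_divide field_simps power2_eq_square)
  have "t\<^sup>2 \<le> t\<^sup>2 * L\<^sup>2"
    using assms(1) mult_mono[of 1 L 1 L] mult_left_mono[of 1 "L\<^sup>2" "t\<^sup>2"] by (simp add: power2_eq_square)
  moreover have "t \<le> 2 * t * L * r"
    using assms(1,2) r(2) mult_mono[of 1 L 1 r] mult_left_mono[of 1 "L * r" t] by simp
  ultimately have "pi * (t\<^sup>2 + t) \<le> pi * (t\<^sup>2 * L\<^sup>2 + 2 * t * L * r)"
    by simp
  moreover have "L + pi / 4 \<le> pi * L"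
    using assms(1) pi_gt3 mult_left_mono[of 2 L "pi - 1"] by (simp add: algebra_simps)
  moreover have "x\<^sup>2 \<le> (t + 1/2)\<^sup>2"
    using assms(3) abs_le_square_iff[of x "t + 1/2"] assms(2) by simp
  ultimately have "L + pi * x\<^sup>2 \<le> pi * (t * L + r)\<^sup>2"
    using r(1) mult_left_mono[of "x\<^sup>2" "(t + 1/2)\<^sup>2" pi]
    by (simp add: power2_eq_square algebra_simps)
  then show ?thesis
    by (simp add: shift gauss_def mult_exp_exp)
qed

lemma Phi_plus_eq_smoothed_indicator:
  "Phi_plus L x =
    smoothed_indicator L (-1/2 - sqrt (1/L)) (1/2 + sqrt (1/L)) x + 24 * exp (- L) * gauss x"
  by (simp add: Phi_plus_def smoothed_indicator_def)

lemma Phi_minus_eq_smoothed_indicator: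
  "Phi_minus L x =
    smoothed_indicator L (-1/2 + sqrt (1/L)) (1/2 - sqrt (1/L)) x - 24 * exp (- L) * gauss x"
  by (simp add: Phi_minus_def smoothed_indicator_def)

lemma chi_le_Phi_plus:
  assumes "2 < L"
  shows "chi x \<le> Phi_plus L x"
proof (cases "-1/2 \<le> x \<and> x < 1/2")
  case True
  define d where "d = sqrt (1/L)"
  have "0 < L" "0 \<le> d"
    using assms by (simp_all add: d_def)
  then have "1 - 2 * exp (- pi * (d * L)\<^sup>2) \<le> smoothed_indicator L (-1/2 - d) (1/2 + d) x"
    using True by (intro smoothed_indicator_near) simp_all
  moreover have "\<bar>x\<bar> \<le> 0 + 1/2"
    using True by linarith
  then have "exp (- pi * (d * L)\<^sup>2) \<le> exp (- L) * gauss x"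
    using exp_neg_pi_square_le_exp_gauss[OF assms order_refl] by (simp add: d_def)
  moreover have "chi x = 1" "0 < exp (- L) * gauss x"
    using True gauss_pos[of x] by (simp_all add: chi_def)
  ultimately show ?thesis
    unfolding Phi_plus_eq_smoothed_indicator d_def[symmetric] by linarith
next
  case False
  then have "chi x = 0"
    by (simp add: chi_def)
  moreover have "0 < 24 * exp (- L) * gauss x"
    using gauss_pos[of x] by simp
  moreover have "0 \<le> smoothed_indicator L (-1/2 - sqrt (1/L)) (1/2 + sqrt (1/L)) x"
    using assms by (intro smoothed_indicator_nonneg) simp_all
  ultimately show ?thesis
    unfolding Phi_plus_eq_smoothed_indicator by linarith
qed

lemma Phi_minus_le_chi:
  assumes "2 < L"
  shows "Phi_minus L x \<le> chi x"
proof -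
  define d where "d = sqrt (1/L)"
  define a where "a = -1/2 + d"
  define b where "b = 1/2 - d"
  have L: "0 < L"
    using assms by simp
  have Phi: "Phi_minus L x = smoothed_indicator L a b x - 24 * exp (- L) * gauss x"
    by (simp add: Phi_minus_eq_smoothed_indicator a_def b_def d_def)
  have error_pos: "0 < 24 * exp (- L) * gauss x"
    using gauss_pos by simp
  have chi_nonneg: "0 \<le> chi x"
    by (simp add: chi_def)
  consider "-1/2 \<le> x \<and> x < 1/2" | "b < a" | "\<not> (-1/2 \<le> x \<and> x < 1/2)" "a \<le> b"
    by fastforce
  then show ?thesis
  proof cases
    case 1
    then have "chi x = 1"
      by (simp add: chi_def)
    then show ?thesis
      using Phi error_pos smoothed_indicator_le_1[OF L, of a b x] by linarith
  next
    case 2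
    then show ?thesis
      using Phi error_pos smoothed_indicator_nonpos[of b a L x] L chi_nonneg by linarith
  next
    case 3
    define t where "t = \<bar>x\<bar> - 1/2"
    have "0 \<le> t" "b + (t + d) \<le> x \<or> x + (t + d) \<le> a"
      using 3(1) by (auto simp: t_def a_def b_def)
    then have "smoothed_indicator L a b x \<le> 2 * exp (- pi * ((t + d) * L)\<^sup>2)"
      using L 3(2) by (intro smoothed_indicator_far) (simp_all add: d_def)
    moreover have "exp (- pi * ((t + d) * L)\<^sup>2) \<le> exp (- L) * gauss x"
      using exp_neg_pi_square_le_exp_gauss[OF assms \<open>0 \<le> t\<close>, of x] by (simp add: t_def d_def)
    moreover have "chi x = 0" "0 < exp (- L) * gauss x"
      using 3(1) gauss_pos[of x] by (simp_all add: chi_def)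
    ultimately show ?thesis
      using Phi by linarith
  qed
qed

theorem lemma3p1:
  fixes L :: real
  assumes "L > 2"
  shows "(\<forall>x. Phi_minus L x \<le> chi x \<and> chi x \<le> Phi_plus L x)
    \<and> (Phi_plus L has_integral (1 + (2 * sqrt (1/L) + 24 * exp (- L)))) UNIV
    \<and> (Phi_minus L has_integral (1 - (2 * sqrt (1/L) + 24 * exp (- L)))) UNIV"
proof (intro conjI allI)
  show "Phi_minus L x \<le> chi x" "chi x \<le> Phi_plus L x" for x
    using assms by (simp_all add: Phi_minus_le_chi chi_le_Phi_plus)
  have L: "0 < L"
    using assms by simp
  have error: "((\<lambda>x. 24 * exp (- L) * gauss x) has_integral 24 * exp (- L)) UNIV"
    using has_integral_mult_right[OF has_integral_gauss] by simp
  have "(Phi_plus L has_integral ((1/2 + sqrt (1/L)) - (-1/2 - sqrt (1/L)) + 24 * exp (- L))) UNIV"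
    unfolding Phi_plus_eq_smoothed_indicator[abs_def]
    by (rule has_integral_add[OF has_integral_smoothed_indicator[OF L] error])
  then show "(Phi_plus L has_integral (1 + (2 * sqrt (1/L) + 24 * exp (- L)))) UNIV"
    by (simp add: algebra_simps)
  have "(Phi_minus L has_integral ((1/2 - sqrt (1/L)) - (-1/2 + sqrt (1/L)) - 24 * exp (- L))) UNIV"
    unfolding Phi_minus_eq_smoothed_indicator[abs_def]
    by (rule has_integral_diff[OF has_integral_smoothed_indicator[OF L] error])
  then show "(Phi_minus L has_integral (1 - (2 * sqrt (1/L) + 24 * exp (- L)))) UNIV"
    by (simp add: algebra_simps)
qed

end
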